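(* Let $T\in V$ be a target variable. If $0<\zeta_T<n$ and $\Upsilon$ is conservative, then $\bigcup_{i=1}^{n}MB_i(T)=MB(T)$.
   Context: Let $G=(V,E)$ be a DAG (causal Bayesian network) over a finite set $V$ of random variables with joint distribution $P$ satisfying the Markov condition with respect to $G$; causal sufficiency is assumed. For $X\in V$, $pa(X)$ and $ch(X)$ are the parents and children of $X$ in $G$, $sp(X)=\big(\bigcup_{Y\in ch(X)}pa(Y)\big)\setminus\{X\}$ is the set of spouses, and $MB(X)=pa(X)\cup ch(X)\cup sp(X)$ is the Markov blanket. There are $n\ge 1$ intervention experiments; in the $i$-th, the set $\Upsilon_i\subseteq V$ (possibly empty) is manipulated, and $\Upsilon=\{\Upsilon_1,\dots,\Upsilon_n\}$. The post-intervention DAG is $G_i=(V,E_i)$ with $E_i=\{(a,b)\in E: b\notin\Upsilon_i\}$, with distribution $P_i(V)=\prod_{V_j\notin\Upsilon_i}P(V_j\mid pa(V_j))\prod_{V_j\in\Upsilon_i}P_i(V_j)$, and $D_i$ is a dataset drawn from $P_i$. It is assumed that each $P_i$ is faithful to $G_i$ and that conditional independence tests on $D_i$ are reliable (return exactly the conditional independences of $P_i$). $MB_i(T)$ denotes the Markov blanket of $T$ found in $D_i$, i.e. the set of parents, children and spouses of $T$ in $G_i$. $\zeta_T=|\{i:T\in\Upsilon_i\}|$. $\Upsilon$ is called conservative if for every $V_j\in\bigcup_{i=1}^n\Upsilon_i$ there exists $i$ with $V_j\notin\Upsilon_i$. *)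

theory Defs
  imports Main
begin

definition dag :: "'a set \<Rightarrow> ('a \<times> 'a) set \<Rightarrow> bool" where
  "dag V E \<longleftrightarrow> finite V \<and> E \<subseteq> V \<times> V \<and> acyclic E"

definition pa :: "('a \<times> 'a) set \<Rightarrow> 'a \<Rightarrow> 'a set" where
  "pa E X = {a. (a, X) \<in> E}"

definition ch :: "('a \<times> 'a) set \<Rightarrow> 'a \<Rightarrow> 'a set" where
  "ch E X = {b. (X, b) \<in> E}"

definition sp :: "('a \<times> 'a) set \<Rightarrow> 'a \<Rightarrow> 'a set" where
  "sp E X = (\<Union>Y\<in>ch E X. pa E Y) - {X}"

definition MB :: "('a \<times> 'a) set \<Rightarrow> 'a \<Rightarrow> 'a set" where
  "MB E X = pa E X \<union> ch E X \<union> sp E X"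

text \<open>Edge set of the post-intervention DAG when the set U is manipulated.\<close>
definition post_int :: "('a \<times> 'a) set \<Rightarrow> 'a set \<Rightarrow> ('a \<times> 'a) set" where
  "post_int E U = {(a, b) \<in> E. b \<notin> U}"

definition MB_i :: "('a \<times> 'a) set \<Rightarrow> (nat \<Rightarrow> 'a set) \<Rightarrow> nat \<Rightarrow> 'a \<Rightarrow> 'a set" where
  "MB_i E Ups i T = MB (post_int E (Ups i)) T"

definition zeta :: "(nat \<Rightarrow> 'a set) \<Rightarrow> nat \<Rightarrow> 'a \<Rightarrow> nat" where
  "zeta Ups n T = card {i \<in> {1..n}. T \<in> Ups i}"

definition conservative :: "(nat \<Rightarrow> 'a set) \<Rightarrow> nat \<Rightarrow> bool" where
  "conservative Ups n \<longleftrightarrow>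
     (\<forall>v \<in> (\<Union>i\<in>{1..n}. Ups i). \<exists>i\<in>{1..n}. v \<notin> Ups i)"

end

theory Submission
  imports Defs
begin

text \<open>A manipulation only deletes edges into manipulated vertices, so every post-intervention
  blanket is contained in the original one. Conversely, each member of \<open>MB E T\<close> is witnessed
  by a single edge into one vertex (\<open>T\<close> for a parent, the child for a child or a spouse), and that
  edge survives in every experiment leaving this vertex unmanipulated. Conservativity (with
  \<open>n \<ge> 1\<close>) provides such an experiment for every vertex.\<close>

lemma MB_mono:
  assumes "E' \<subseteq> E"
  shows "MB E' X \<subseteq> MB E X"
  using assms unfolding MB_def pa_def ch_def sp_def by blast

lemma post_int_subset: "post_int E U \<subseteq> E"
  unfolding post_int_def by blast

lemma edge_in_post_int: "(a, b) \<in> E \<Longrightarrow> b \<notin> U \<Longrightarrow> (a, b) \<in> post_int E U"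
  unfolding post_int_def by blast

lemma MB_eq_UN_post_int:
  assumes unmanipulated: "\<And>v. \<exists>i\<in>I. v \<notin> U i"
  shows "(\<Union>i\<in>I. MB (post_int E (U i)) T) = MB E T"
proof
  show "(\<Union>i\<in>I. MB (post_int E (U i)) T) \<subseteq> MB E T"
    using MB_mono[OF post_int_subset] by (rule UN_least)
  show "MB E T \<subseteq> (\<Union>i\<in>I. MB (post_int E (U i)) T)"
  proof
    fix x assume "x \<in> MB E T"
    then consider "(x, T) \<in> E" | "(T, x) \<in> E" | Y where "(T, Y) \<in> E" "(x, Y) \<in> E" "x \<noteq> T"
      unfolding MB_def pa_def ch_def sp_def by blast
    then show "x \<in> (\<Union>i\<in>I. MB (post_int E (U i)) T)"
    proof cases
      case 1
      obtain i where "i \<in> I" "T \<notin> U i" using unmanipulated by blast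
      with 1 show ?thesis unfolding MB_def pa_def by (blast intro: edge_in_post_int)
    next
      case 2
      obtain i where "i \<in> I" "x \<notin> U i" using unmanipulated by blast
      with 2 show ?thesis unfolding MB_def ch_def by (blast intro: edge_in_post_int)
    next
      case 3
      obtain i where "i \<in> I" "Y \<notin> U i" using unmanipulated by blast
      with 3 show ?thesis unfolding MB_def sp_def pa_def ch_def by (blast intro: edge_in_post_int)
    qed
  qed
qed

lemma conservative_unmanipulated:
  assumes "conservative Ups n" and "n \<ge> 1"
  shows "\<exists>i\<in>{1..n}. v \<notin> Ups i"
proof (cases "v \<in> (\<Union>i\<in>{1..n}. Ups i)")
  case True
  then show ?thesis using assms(1) unfolding conservative_def by blast
next
  case False
  then show ?thesis using assms(2) by auto
qed

theorem theorem5: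
  fixes V :: "'a set" and E :: "('a \<times> 'a) set" and Ups :: "nat \<Rightarrow> 'a set"
    and n :: nat and T :: 'a
  assumes "dag V E"
    and "n \<ge> 1"
    and "\<forall>i\<in>{1..n}. Ups i \<subseteq> V"
    and "T \<in> V"
    and "0 < zeta Ups n T" and "zeta Ups n T < n"
    and "conservative Ups n"
  shows "(\<Union>i\<in>{1..n}. MB_i E Ups i T) = MB E T"
  unfolding MB_i_def
  by (rule MB_eq_UN_post_int) (rule conservative_unmanipulated[OF assms(7,2)])

end
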